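(* Let $V$ be an $n$-dimensional complex Hilbert space with orthonormal basis $\{\lvert\psi_i\rangle\}_{i=1}^n$, and let $u$ be an $n\times n$ complex matrix with singular value decomposition $u = L D R$, where $L,R$ are unitary and $D=\mathrm{diag}(\sigma_1,\dots,\sigma_n)$ with $1\ge \sigma_1\ge\cdots\ge\sigma_n\ge 0$. Let $\epsilon_1,\dots,\epsilon_n$ be real numbers with $\tilde\sigma_j:=\sigma_j+\epsilon_j\in[0,1]$ for all $j$, and let $\tilde u$ be the matrix $\tilde u_{ij}=\sum_{k=1}^n \tilde\sigma_k L_{ik}R_{kj}$. Let $\mathbf{u}=\sum_{i,j} u_{ij}\lvert\psi_i\rangle\langle\psi_j\rvert$ and $\tilde{\mathbf{u}}=\sum_{i,j}\tilde u_{ij}\lvert\psi_i\rangle\langle\psi_j\rvert$ be the associated linear maps $V\to V$. Then, in the operator 2-norm on $\wedge V$, $$\|\wedge\mathbf{u}-\wedge\tilde{\mathbf{u}}\|\le \sum_{j=1}^n |\epsilon_j|.$$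
   Context: The exterior algebra (Fock space) $\wedge V=\bigoplus_{k\ge 0}\wedge^k V$ is the Hilbert space with orthonormal basis $\{\lvert\psi_{i_1}\rangle\wedge\cdots\wedge\lvert\psi_{i_k}\rangle : 1\le i_1<\cdots<i_k\le n,\ k\ge 0\}$. For a linear map $\mathbf{u}:V\to V$, the wedged map $\wedge\mathbf{u}:\wedge V\to\wedge V$ is the linear map defined on this basis by $\wedge\mathbf{u}(\lvert\psi_{i_1}\rangle\wedge\cdots\wedge\lvert\psi_{i_k}\rangle)=\mathbf{u}\lvert\psi_{i_1}\rangle\wedge\cdots\wedge\mathbf{u}\lvert\psi_{i_k}\rangle$ (with the empty wedge, $k=0$, mapped to itself). *)

theory Defs
  imports "HOL-Analysis.Analysis"
begin

text \<open>Finite index type 'n (with a linear order, used to list basis vectors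
  psi_i in increasing order). Vectors of V are complex^'n (coordinates w.r.t. the
  orthonormal basis psi_i); matrices are complex^'n^'n, with u$i$j = u_ij.
  The Fock space (exterior algebra) of V is complex^('n set): coordinates w.r.t.
  the orthonormal basis psi_{i_1} wedge ... wedge psi_{i_k} (i_1<...<i_k), indexed
  by the set {i_1,...,i_k}; its norm is the Hilbert (L2) norm.\<close>

definition adjoint_mat :: "complex^'n^'n \<Rightarrow> complex^'n^'n" where
  "adjoint_mat M = (\<chi> i j. cnj (M $ j $ i))"

definition unitary_mat :: "complex^'n^'n \<Rightarrow> bool" where
  "unitary_mat M \<longleftrightarrow> adjoint_mat M ** M = mat 1 \<and> M ** adjoint_mat M = mat 1"

definition diag_mat :: "('n \<Rightarrow> real) \<Rightarrow> complex^'n^'n" where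
  "diag_mat s = (\<chi> i j. if i = j then complex_of_real (s i) else 0)"

text \<open>Coordinates of the wedge product v_0 wedge ... wedge v_(k-1) of k vectors of V
  in the Fock basis: the coefficient of psi_{s_1} wedge ... wedge psi_{s_k}
  (s_1<...<s_k) is the k x k determinant det[v_j(s_i)] (Leibniz expansion).\<close>

definition wedge_vecs :: "nat \<Rightarrow> (nat \<Rightarrow> 'n::{finite,linorder} \<Rightarrow> complex) \<Rightarrow> complex^('n set)" where
  "wedge_vecs k v = (\<chi> S. if card S = k then
      (\<Sum>p\<in>{p. p permutes {..<k}}. of_int (sign p) *
          (\<Prod>i<k. v i (sorted_list_of_set S ! p i)))
    else 0)"

text \<open>The wedged map of the linear map with matrix u (u psi_t = sum_i u_it psi_i):
  the linear map on the Fock space sending the basis vector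
  psi_{t_1} wedge ... wedge psi_{t_k} to u psi_{t_1} wedge ... wedge u psi_{t_k}.\<close>

definition wedge_map :: "((complex, 'n::{finite,linorder}) vec, 'n) vec \<Rightarrow> (complex, 'n set) vec \<Rightarrow> (complex, 'n set) vec" where
  "wedge_map u x = (\<Sum>T\<in>UNIV. (x $ T) *s
      wedge_vecs (card T) (\<lambda>j i. u $ i $ (sorted_list_of_set T ! j)))"

end

theory Submission
  imports Defs
begin

text \<open>By the Cauchy--Binet formula the matrix of the wedged map in the Fock basis is the
  compound matrix of minors, so \<open>u \<mapsto> \<wedge>u\<close> is multiplicative, sends unitary matrices to
  isometries, and sends \<open>diag \<sigma>\<close> to the diagonal operator with entries \<open>\<Prod>j\<in>S. \<sigma> j\<close>.
  Hence \<open>\<wedge>u - \<wedge>u' = \<wedge>L (\<wedge>D - \<wedge>D') \<wedge>R\<close> with isometries on both sides, and each diagonal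
  entry of \<open>\<wedge>D - \<wedge>D'\<close> is a difference of two products of numbers in [0, 1], hence bounded
  by \<open>\<Sum>j. \<bar>\<epsilon> j\<bar>\<close>.\<close>

definition minor :: "'a::comm_ring_1^'n^'m \<Rightarrow> nat \<Rightarrow> (nat \<Rightarrow> 'm) \<Rightarrow> (nat \<Rightarrow> 'n) \<Rightarrow> 'a" where
  "minor A k s t = (\<Sum>p | p permutes {..<k}. of_int (sign p) * (\<Prod>i<k. A $ s (p i) $ t i))"

lemma minor_cong:
  assumes "\<And>i. i < k \<Longrightarrow> t i = t' i"
  shows "minor A k s t = minor A k s t'"
  unfolding minor_def using assms by (intro sum.cong refl arg_cong2[where f="(*)"] prod.cong) auto

lemma minor_permute_columns:
  assumes q: "q permutes {..<k}"
  shows "minor A k s (t \<circ> q) = of_int (sign q) * minor A k s t"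
proof -
  have "minor A k s (t \<circ> q) =
      (\<Sum>p | p permutes {..<k}. of_int (sign (p \<circ> q)) * (\<Prod>i<k. A $ s (p (q i)) $ t (q i)))"
    unfolding minor_def by (subst sum_permutations_compose_right[OF q]) simp
  also have "\<dots> = (\<Sum>p | p permutes {..<k}. of_int (sign q) * (of_int (sign p) * (\<Prod>i<k. A $ s (p i) $ t i)))"
  proof (rule sum.cong[OF refl])
    fix p assume "p \<in> {p. p permutes {..<k}}"
    then have "sign (p \<circ> q) = sign p * sign q"
      using q by (simp add: sign_compose permutes_imp_permutation[OF finite_lessThan])
    then show "of_int (sign (p \<circ> q)) * (\<Prod>i<k. A $ s (p (q i)) $ t (q i)) =
        of_int (sign q) * (of_int (sign p) * (\<Prod>i<k. A $ s (p i) $ t i))"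
      using prod.permute[OF q, of "\<lambda>i. A $ s (p i) $ t i"] by simp
  qed
  also have "\<dots> = of_int (sign q) * minor A k s t"
    unfolding minor_def by (simp add: sum_distrib_left)
  finally show ?thesis .
qed

text \<open>Swapping the two columns gives \<open>minor = - minor\<close>, which forces \<open>minor = 0\<close> only
  in characteristic \<open>\<noteq> 2\<close>.\<close>
lemma minor_eq_0_if_columns_eq:
  fixes A :: "'a::{idom,ring_char_0}^'n^'m"
  assumes "a < k" "b < k" "a \<noteq> b" "t a = t b"
  shows "minor A k s t = 0"
proof -
  have swap: "Transposition.transpose a b permutes {..<k}"
    using assms by (intro permutes_swap_id) auto
  have "t \<circ> Transposition.transpose a b = t"
    using assms(4) by (auto simp: fun_eq_iff Transposition.transpose_def)
  then have "minor A k s t = - minor A k s t"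
    using minor_permute_columns[OF swap, of A s t] assms(3) by (simp add: sign_swap_id)
  then show ?thesis by simp
qed

lemma minor_transpose: "minor (transpose A) k t s = minor A k s t"
proof -
  have "minor (transpose A) k t s =
      (\<Sum>p | p permutes {..<k}. of_int (sign (inv p)) * (\<Prod>i<k. A $ s i $ t (inv p i)))"
    unfolding minor_def transpose_def by (subst sum_permutations_inverse) simp
  also have "\<dots> = minor A k s t"
    unfolding minor_def
  proof (rule sum.cong[OF refl])
    fix p assume "p \<in> {p. p permutes {..<k}}"
    then have p: "p permutes {..<k}" by simp
    have "(\<Prod>i<k. A $ s i $ t (inv p i)) = (\<Prod>i<k. A $ s (p i) $ t (inv p (p i)))"
      using prod.permute[OF p, of "\<lambda>i. A $ s i $ t (inv p i)"] by simp
    then show "of_int (sign (inv p)) * (\<Prod>i<k. A $ s i $ t (inv p i)) =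
        of_int (sign p) * (\<Prod>i<k. A $ s (p i) $ t i)"
      using p by (simp add: sign_inverse permutes_imp_permutation[OF finite_lessThan] permutes_inverses(2))
  qed
  finally show ?thesis .
qed

lemma minor_matrix_mult_injections:
  fixes A :: "'a::{idom,ring_char_0}^'n^'m" and B :: "'a^'p^'n"
  shows "minor (A ** B) k s t =
    (\<Sum>f | f \<in> {..<k} \<rightarrow>\<^sub>E UNIV \<and> inj_on f {..<k}. (\<Prod>i<k. B $ f i $ t i) * minor A k s f)"
proof -
  let ?F = "{..<k} \<rightarrow>\<^sub>E (UNIV :: 'n set)"
  have "minor (A ** B) k s t = (\<Sum>p | p permutes {..<k}. of_int (sign p) *
      (\<Sum>f\<in>?F. \<Prod>i<k. A $ s (p i) $ f i * B $ f i $ t i))"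
    unfolding minor_def matrix_matrix_mult_def by (simp add: prod_sum_PiE)
  also have "\<dots> = (\<Sum>p | p permutes {..<k}. \<Sum>f\<in>?F.
      (\<Prod>i<k. B $ f i $ t i) * (of_int (sign p) * (\<Prod>i<k. A $ s (p i) $ f i)))"
    by (simp add: prod.distrib sum_distrib_left mult_ac)
  also have "\<dots> = (\<Sum>f\<in>?F. (\<Prod>i<k. B $ f i $ t i) * minor A k s f)"
    unfolding minor_def by (subst sum.swap) (simp add: sum_distrib_left)
  also have "\<dots> = (\<Sum>f | f \<in> ?F \<and> inj_on f {..<k}. (\<Prod>i<k. B $ f i $ t i) * minor A k s f)"
  proof (rule sum.mono_neutral_right)
    show "\<forall>f\<in>?F - {f. f \<in> ?F \<and> inj_on f {..<k}}. (\<Prod>i<k. B $ f i $ t i) * minor A k s f = 0"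
      by (auto simp: inj_on_def intro: minor_eq_0_if_columns_eq)
  qed (auto simp: finite_PiE)
  finally show ?thesis .
qed

lemma bij_betw_permutes_bijections:
  assumes m: "bij_betw m A M"
  shows "bij_betw (\<lambda>q. restrict (m \<circ> q) A) {q. q permutes A}
    {f. f \<in> A \<rightarrow>\<^sub>E UNIV \<and> bij_betw f A M}"
proof (rule bij_betw_byWitness[where f' = "\<lambda>f i. if i \<in> A then the_inv_into A m (f i) else i"])
  show "\<forall>q\<in>{q. q permutes A}. (\<lambda>i. if i \<in> A then the_inv_into A m (restrict (m \<circ> q) A i) else i) = q"
    using m by (auto simp: fun_eq_iff the_inv_into_f_f bij_betw_def permutes_in_image permutes_not_in)
  show "\<forall>f\<in>{f. f \<in> A \<rightarrow>\<^sub>E UNIV \<and> bij_betw f A M}.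
      restrict (m \<circ> (\<lambda>i. if i \<in> A then the_inv_into A m (f i) else i)) A = f"
    using m by (auto simp: fun_eq_iff f_the_inv_into_f_bij_betw bij_betwE PiE_def extensional_def)
  show "(\<lambda>q. restrict (m \<circ> q) A) ` {q. q permutes A} \<subseteq> {f. f \<in> A \<rightarrow>\<^sub>E UNIV \<and> bij_betw f A M}"
  proof safe
    fix q assume "q permutes A"
    then have "bij_betw (m \<circ> q) A M"
      using m by (blast intro: bij_betw_trans permutes_imp_bij)
    then show "bij_betw (restrict (m \<circ> q) A) A M"
      by (rule bij_betw_cong[THEN iffD1, rotated]) simp
  qed auto
  show "(\<lambda>f i. if i \<in> A then the_inv_into A m (f i) else i) `
      {f. f \<in> A \<rightarrow>\<^sub>E UNIV \<and> bij_betw f A M} \<subseteq> {q. q permutes A}"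
  proof safe
    fix f assume "bij_betw f A M"
    then have "bij_betw (the_inv_into A m \<circ> f) A A"
      using m by (blast intro: bij_betw_trans bij_betw_the_inv_into)
    then have "bij_betw (\<lambda>i. if i \<in> A then the_inv_into A m (f i) else i) A A"
      by (rule bij_betw_cong[THEN iffD1, rotated]) simp
    then show "(\<lambda>i. if i \<in> A then the_inv_into A m (f i) else i) permutes A"
      by (rule bij_imp_permutes) simp
  qed
qed

lemma minor_matrix_mult_bijections:
  fixes A :: "'a::comm_ring_1^'n^'m" and B :: "'a^'p^'n"
  assumes m: "bij_betw m {..<k} M"
  shows "(\<Sum>f | f \<in> {..<k} \<rightarrow>\<^sub>E UNIV \<and> bij_betw f {..<k} M. (\<Prod>i<k. B $ f i $ t i) * minor A k s f) =
    minor A k s m * minor B k m t"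
proof -
  have "(\<Sum>f | f \<in> {..<k} \<rightarrow>\<^sub>E UNIV \<and> bij_betw f {..<k} M. (\<Prod>i<k. B $ f i $ t i) * minor A k s f) =
      (\<Sum>q | q permutes {..<k}. (\<Prod>i<k. B $ m (q i) $ t i) * minor A k s (m \<circ> q))"
    by (subst sum.reindex_bij_betw[OF bij_betw_permutes_bijections[OF m], symmetric])
      (intro sum.cong refl arg_cong2[where f = "(*)"] prod.cong minor_cong; simp)
  also have "\<dots> = (\<Sum>q | q permutes {..<k}. minor A k s m * (of_int (sign q) * (\<Prod>i<k. B $ m (q i) $ t i)))"
    by (intro sum.cong refl) (simp add: minor_permute_columns mult_ac)
  also have "\<dots> = minor A k s m * minor B k m t"
    unfolding minor_def by (simp add: sum_distrib_left)
  finally show ?thesis .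
qed

lemma bij_betw_nth_sorted_list_of_set:
  "finite M \<Longrightarrow> bij_betw ((!) (sorted_list_of_set M)) {..<card M} M"
  by (rule bij_betw_nth) simp_all

lemma minor_matrix_mult:
  fixes A :: "'a::{idom,ring_char_0}^'n::{finite,linorder}^'m" and B :: "'a^'p^'n::{finite,linorder}"
  shows "minor (A ** B) k s t = (\<Sum>M | card M = k.
    minor A k s ((!) (sorted_list_of_set M)) * minor B k ((!) (sorted_list_of_set M)) t)"
proof -
  let ?FI = "{f. f \<in> {..<k} \<rightarrow>\<^sub>E (UNIV :: 'n set) \<and> inj_on f {..<k}}"
  let ?h = "\<lambda>f. (\<Prod>i<k. B $ f i $ t i) * minor A k s f"
  have fibres: "{f. f \<in> ?FI \<and> f ` {..<k} = M} = {f. f \<in> {..<k} \<rightarrow>\<^sub>E UNIV \<and> bij_betw f {..<k} M}"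
    for M by (simp add: bij_betw_def conj_assoc)
  have "minor (A ** B) k s t = sum ?h ?FI"
    by (rule minor_matrix_mult_injections)
  also have "\<dots> = (\<Sum>M | card M = k. \<Sum>f | f \<in> ?FI \<and> f ` {..<k} = M. ?h f)"
  proof (rule sum.group[of ?FI "{M. card M = k}" "\<lambda>f. f ` {..<k}" ?h, symmetric])
    show "finite ?FI"
      by (rule finite_subset[of _ "{..<k} \<rightarrow>\<^sub>E UNIV"]) (auto simp: finite_PiE)
    show "(\<lambda>f. f ` {..<k}) ` ?FI \<subseteq> {M. card M = k}"
      by (simp add: image_subset_iff card_image)
  qed simp
  also have "\<dots> = (\<Sum>M | card M = k.
      minor A k s ((!) (sorted_list_of_set M)) * minor B k ((!) (sorted_list_of_set M)) t)"
    unfolding fibres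
    using bij_betw_nth_sorted_list_of_set[OF finite_class.finite]
    by (intro sum.cong refl minor_matrix_mult_bijections) auto
  finally show ?thesis .
qed

definition compound :: "'a::comm_ring_1^'n::{finite,linorder}^'m::{finite,linorder} \<Rightarrow> 'm set \<Rightarrow> 'n set \<Rightarrow> 'a" where
  "compound A S T = (if card S = card T
     then minor A (card T) ((!) (sorted_list_of_set S)) ((!) (sorted_list_of_set T)) else 0)"

lemma wedge_map_component: "wedge_map A x $ S = (\<Sum>T\<in>UNIV. compound A S T * x $ T)"
  unfolding wedge_map_def wedge_vecs_def compound_def minor_def
  by (auto simp: sum_component intro!: sum.cong)

lemma compound_matrix_mult:
  fixes A :: "'a::{idom,ring_char_0}^'n::{finite,linorder}^'m::{finite,linorder}"
    and B :: "'a^'p::{finite,linorder}^'n::{finite,linorder}"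
  shows "compound (A ** B) S T = (\<Sum>M\<in>UNIV. compound A S M * compound B M T)"
proof (cases "card S = card T")
  case True
  have "compound (A ** B) S T = (\<Sum>M | card M = card T. compound A S M * compound B M T)"
    unfolding compound_def using True by (simp add: minor_matrix_mult)
  also have "\<dots> = (\<Sum>M\<in>UNIV. compound A S M * compound B M T)"
    by (rule sum.mono_neutral_left) (auto simp: compound_def True)
  finally show ?thesis .
next
  case False
  then show ?thesis
    unfolding compound_def by (auto intro!: sum.neutral)
qed

lemma wedge_map_matrix_mult: "wedge_map (A ** B) x = wedge_map A (wedge_map B x)"
proof -
  have "wedge_map A (wedge_map B x) $ S = (\<Sum>M\<in>UNIV. \<Sum>T\<in>UNIV. compound A S M * compound B M T * x $ T)"
    for S by (simp add: wedge_map_component sum_distrib_left mult_ac)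
  also have "\<dots> S = (\<Sum>T\<in>UNIV. (\<Sum>M\<in>UNIV. compound A S M * compound B M T) * x $ T)" for S
    by (subst sum.swap) (simp add: sum_distrib_right)
  finally show ?thesis
    by (simp add: vec_eq_iff wedge_map_component compound_matrix_mult)
qed

lemma wedge_map_diff: "wedge_map A (x - y) = wedge_map A x - wedge_map A y"
  by (simp add: vec_eq_iff wedge_map_component sum_subtractf right_diff_distrib)

lemma minor_diag_mat_eq_0:
  assumes "s ` {..<k} \<noteq> t ` {..<k}"
  shows "minor (diag_mat d) k s t = 0"
  unfolding minor_def
proof (rule sum.neutral, safe)
  fix p assume p: "p permutes {..<k}"
  have "\<exists>i<k. s (p i) \<noteq> t i"
  proof (rule ccontr)
    assume "\<not> ?thesis"
    then have "t ` {..<k} = s ` p ` {..<k}"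
      by (auto simp: image_image)
    with assms p show False
      by (simp add: permutes_image)
  qed
  then show "of_int (sign p) * (\<Prod>i<k. diag_mat d $ s (p i) $ t i) = 0"
    by (auto simp: diag_mat_def)
qed

lemma minor_diag_mat_same_index:
  assumes s: "inj_on s {..<k}"
  shows "minor (diag_mat d) k s s = complex_of_real (\<Prod>i<k. d (s i))"
proof -
  let ?term = "\<lambda>p. of_int (sign p) * (\<Prod>i<k. diag_mat d $ s (p i) $ s i)"
  have vanish: "?term p = 0" if p: "p \<in> {p. p permutes {..<k}} - {id}" for p
  proof -
    obtain i where "p i \<noteq> i"
      using p by (auto simp: fun_eq_iff)
    then have "i < k" "p i < k"
      using p permutes_not_in permutes_in_image by fastforce+
    with \<open>p i \<noteq> i\<close> have "s (p i) \<noteq> s i"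
      using s by (auto dest: inj_onD)
    with \<open>i < k\<close> show ?thesis
      by (auto simp: diag_mat_def)
  qed
  have "minor (diag_mat d) k s s = ?term id + sum ?term ({p. p permutes {..<k}} - {id})"
    unfolding minor_def by (intro sum.remove) (simp_all add: finite_permutations permutes_id)
  also have "sum ?term ({p. p permutes {..<k}} - {id}) = 0"
    using vanish by (intro sum.neutral) blast
  finally show ?thesis
    by (simp add: diag_mat_def)
qed

lemma compound_diag_mat:
  "compound (diag_mat d) S T = (if S = T then complex_of_real (\<Prod>x\<in>S. d x) else 0)"
proof (cases "card S = card T")
  case True
  let ?s = "(!) (sorted_list_of_set S)" and ?t = "(!) (sorted_list_of_set T)"
  have s: "bij_betw ?s {..<card T} S" and t: "bij_betw ?t {..<card T} T"
    using True bij_betw_nth_sorted_list_of_set[of S] bij_betw_nth_sorted_list_of_set[of T] by simp_all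
  show ?thesis
  proof (cases "S = T")
    case True
    then show ?thesis
      using s prod.reindex_bij_betw[OF s, of d]
      by (simp add: compound_def minor_diag_mat_same_index bij_betw_imp_inj_on)
  next
    case False
    then have "?s ` {..<card T} \<noteq> ?t ` {..<card T}"
      using s t by (simp add: bij_betw_def)
    with False True show ?thesis
      by (simp add: compound_def minor_diag_mat_eq_0)
  qed
next
  case False
  then show ?thesis
    by (auto simp: compound_def)
qed

lemma minor_adjoint_mat: "minor (adjoint_mat A) k s t = cnj (minor A k t s)"
proof -
  have "minor (adjoint_mat A) k s t = cnj (minor (transpose A) k s t)"
    unfolding minor_def adjoint_mat_def transpose_def by (simp add: cnj_sum cnj_prod)
  then show ?thesis
    by (simp add: minor_transpose)
qed

lemma compound_adjoint_mat: "compound (adjoint_mat A) S T = cnj (compound A T S)"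
  by (simp add: compound_def minor_adjoint_mat)

lemma of_real_norm_power2_vec:
  "complex_of_real ((norm v)\<^sup>2) = (\<Sum>i\<in>UNIV. v $ i * cnj (v $ i))"
proof -
  have "(norm v)\<^sup>2 = (\<Sum>i\<in>UNIV. (norm (v $ i))\<^sup>2)"
    by (simp add: norm_vec_def L2_set_def sum_nonneg)
  then show ?thesis
    by (simp only: of_real_sum complex_norm_square)
qed

lemma norm_orthonormal_columns_apply:
  fixes C :: "'m::finite \<Rightarrow> 'n::finite \<Rightarrow> complex"
  assumes orth: "\<And>T T'. (\<Sum>S\<in>UNIV. cnj (C S T') * C S T) = (if T' = T then 1 else 0)"
  shows "norm (\<chi> S. \<Sum>T\<in>UNIV. C S T * y $ T) = norm y"
proof -
  let ?z = "\<chi> S. \<Sum>T\<in>UNIV. C S T * y $ T"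
  have "complex_of_real ((norm ?z)\<^sup>2) =
      (\<Sum>S\<in>UNIV. \<Sum>T\<in>UNIV. \<Sum>T'\<in>UNIV. y $ T * cnj (y $ T') * (cnj (C S T') * C S T))"
    unfolding of_real_norm_power2_vec by (simp add: cnj_sum sum_product mult_ac)
  also have "\<dots> = (\<Sum>T\<in>UNIV. \<Sum>T'\<in>UNIV. \<Sum>S\<in>UNIV. y $ T * cnj (y $ T') * (cnj (C S T') * C S T))"
    by (rule trans[OF sum.swap]) (intro sum.cong refl sum.swap)
  also have "\<dots> = (\<Sum>T\<in>UNIV. \<Sum>T'\<in>UNIV. y $ T * cnj (y $ T') * (\<Sum>S\<in>UNIV. cnj (C S T') * C S T))"
    by (simp add: sum_distrib_left)
  also have "\<dots> = (\<Sum>T\<in>UNIV. y $ T * cnj (y $ T))"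
    by (simp add: orth if_distrib[of "\<lambda>x. _ * x"] cong: if_cong)
  also have "\<dots> = complex_of_real ((norm y)\<^sup>2)"
    by (rule of_real_norm_power2_vec[symmetric])
  finally have "(norm ?z)\<^sup>2 = (norm y)\<^sup>2"
    by (simp only: of_real_eq_iff)
  then show ?thesis
    by (simp add: power2_eq_iff_nonneg)
qed

lemma compound_unitary_orthonormal:
  assumes "unitary_mat L"
  shows "(\<Sum>S\<in>UNIV. cnj (compound L S T') * compound L S T) = (if T' = T then 1 else 0)"
proof -
  have "adjoint_mat L ** L = diag_mat (\<lambda>_. 1)"
    using assms by (simp add: unitary_mat_def vec_eq_iff mat_def diag_mat_def)
  then have "compound (adjoint_mat L ** L) T' T = (if T' = T then 1 else 0)"
    by (simp add: compound_diag_mat)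
  then show ?thesis
    by (simp add: compound_matrix_mult compound_adjoint_mat)
qed

lemma norm_wedge_map_unitary:
  assumes "unitary_mat L"
  shows "norm (wedge_map L y) = norm y"
proof -
  have "wedge_map L y = (\<chi> S. \<Sum>T\<in>UNIV. compound L S T * y $ T)"
    by (simp add: vec_eq_iff wedge_map_component)
  then show ?thesis
    using norm_orthonormal_columns_apply[OF compound_unitary_orthonormal[OF assms]] by simp
qed

lemma wedge_map_diag_mat_component:
  "wedge_map (diag_mat d) y $ S = complex_of_real (\<Prod>j\<in>S. d j) * y $ S"
  by (simp add: wedge_map_component compound_diag_mat if_distrib[of "\<lambda>x. x * _"] cong: if_cong)

lemma norm_wedge_map_diag_mat_diff_le:
  fixes \<sigma> \<tau> :: "'n::{finite,linorder} \<Rightarrow> real"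
  assumes "\<And>j. 0 \<le> \<sigma> j \<and> \<sigma> j \<le> 1" and "\<And>j. 0 \<le> \<tau> j \<and> \<tau> j \<le> 1"
  shows "norm (wedge_map (diag_mat \<sigma>) y - wedge_map (diag_mat \<tau>) y) \<le> (\<Sum>j\<in>UNIV. \<bar>\<sigma> j - \<tau> j\<bar>) * norm y"
proof -
  let ?E = "\<Sum>j\<in>UNIV. \<bar>\<sigma> j - \<tau> j\<bar>"
  have "norm ((wedge_map (diag_mat \<sigma>) y - wedge_map (diag_mat \<tau>) y) $ S) \<le> norm ((?E *\<^sub>R y) $ S)" for S
  proof -
    have "\<bar>(\<Prod>j\<in>S. \<sigma> j) - (\<Prod>j\<in>S. \<tau> j)\<bar> \<le> (\<Sum>j\<in>S. \<bar>\<sigma> j - \<tau> j\<bar>)"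
      using norm_prod_diff[of S \<sigma> \<tau>] assms by (simp add: abs_le_iff)
    also have "\<dots> \<le> ?E"
      by (rule sum_mono2) auto
    finally have "\<bar>(\<Prod>j\<in>S. \<sigma> j) - (\<Prod>j\<in>S. \<tau> j)\<bar> * norm (y $ S) \<le> ?E * norm (y $ S)"
      by (rule mult_right_mono) simp
    moreover have "(wedge_map (diag_mat \<sigma>) y - wedge_map (diag_mat \<tau>) y) $ S =
        complex_of_real ((\<Prod>j\<in>S. \<sigma> j) - (\<Prod>j\<in>S. \<tau> j)) * y $ S"
      by (simp only: vector_minus_component wedge_map_diag_mat_component of_real_diff left_diff_distrib)
    moreover have "\<bar>?E\<bar> = ?E"
      by (simp add: sum_nonneg)
    ultimately show ?thesis
      by (simp only: norm_mult norm_of_real vector_scaleR_component norm_scaleR)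
  qed
  then have "norm (wedge_map (diag_mat \<sigma>) y - wedge_map (diag_mat \<tau>) y) \<le> norm (?E *\<^sub>R y)"
    by (rule norm_le_componentwise_cart)
  then show ?thesis
    by (simp add: sum_nonneg)
qed

lemma matrix_mult_diag_mat_mult_component:
  "(L ** diag_mat d ** R) $ i $ j = (\<Sum>k\<in>UNIV. complex_of_real (d k) * L $ i $ k * R $ k $ j)"
proof -
  have "(L ** diag_mat d) $ i $ k = L $ i $ k * complex_of_real (d k)" for k
    by (simp add: matrix_matrix_mult_def diag_mat_def if_distrib[of "\<lambda>x. _ * x"] cong: if_cong)
  then show ?thesis
    by (simp add: matrix_matrix_mult_def[of "L ** diag_mat d" R] mult_ac)
qed

theorem mainTheorem1:
  fixes u L R :: "((complex, 'n::{finite,linorder}) vec, 'n) vec"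
    and \<sigma> \<epsilon> :: "'n \<Rightarrow> real"
  assumes "unitary_mat L" and "unitary_mat R"
    and "u = L ** diag_mat \<sigma> ** R"
    and "\<And>j. 0 \<le> \<sigma> j \<and> \<sigma> j \<le> 1"
    and "\<And>i j. i \<le> j \<Longrightarrow> \<sigma> j \<le> \<sigma> i"
    and "\<And>j. 0 \<le> \<sigma> j + \<epsilon> j \<and> \<sigma> j + \<epsilon> j \<le> 1"
  shows "onorm (\<lambda>x. wedge_map u x - wedge_map
           (\<chi> i j. \<Sum>k\<in>UNIV. complex_of_real (\<sigma> k + \<epsilon> k) * L $ i $ k * R $ k $ j) x)
         \<le> (\<Sum>j\<in>UNIV. \<bar>\<epsilon> j\<bar>)"
proof (rule onorm_le)
  fix x
  define \<tau> where "\<tau> j = \<sigma> j + \<epsilon> j" for j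
  let ?u' = "\<chi> i j. \<Sum>k\<in>UNIV. complex_of_real (\<sigma> k + \<epsilon> k) * L $ i $ k * R $ k $ j"
  let ?y = "wedge_map R x"
  have "?u' = L ** diag_mat \<tau> ** R"
    by (simp add: vec_eq_iff matrix_mult_diag_mat_mult_component \<tau>_def)
  then have "norm (wedge_map u x - wedge_map ?u' x) =
      norm (wedge_map L (wedge_map (diag_mat \<sigma>) ?y - wedge_map (diag_mat \<tau>) ?y))"
    by (simp add: assms(3) wedge_map_matrix_mult wedge_map_diff)
  also have "\<dots> = norm (wedge_map (diag_mat \<sigma>) ?y - wedge_map (diag_mat \<tau>) ?y)"
    using assms(1) by (rule norm_wedge_map_unitary)
  also have "\<dots> \<le> (\<Sum>j\<in>UNIV. \<bar>\<sigma> j - \<tau> j\<bar>) * norm ?y"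
    using assms(4,6) by (intro norm_wedge_map_diag_mat_diff_le) (auto simp: \<tau>_def)
  also have "\<dots> = (\<Sum>j\<in>UNIV. \<bar>\<epsilon> j\<bar>) * norm x"
    using assms(2) by (simp add: \<tau>_def norm_wedge_map_unitary)
  finally show "norm (wedge_map u x - wedge_map ?u' x) \<le> (\<Sum>j\<in>UNIV. \<bar>\<epsilon> j\<bar>) * norm x" .
qed

end
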